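(* For terms $L,M$ of the CCV $\lambda\mu$-calculus, if $L=_{ccv}M$ then $[\![L]\!]=[\![M]\!]$ with respect to $\beta\eta$-equality of the $\lambda$-calculus.
   Context: CCV $\lambda\mu$-calculus. Ordinary variables $x,y,z,\dots$ and continuation variables $k,l,\dots$ are disjoint. Terms $M ::= x \mid \lambda x.M \mid MM \mid (M\ \mathsf{where}\ x:=M) \mid \mu k.J$, jumps $J ::= [k]M \mid (J\ \mathsf{where}\ x:=M)$, where $(L\ \mathsf{where}\ x:=M)$ means $\mathsf{let}\ x=M\ \mathsf{in}\ L$ ($x$ bound in $L$ only). Terms are identified up to $\alpha$-conversion and the congruence generated by (E1) $(L\ \mathsf{where}\ x:=(M\ \mathsf{where}\ y:=N))=((L\ \mathsf{where}\ x:=M)\ \mathsf{where}\ y:=N)$ if $y$ not free in $L$; (E2) $((\mu k.J)\ \mathsf{where}\ x:=M)=\mu k.(J\ \mathsf{where}\ x:=M)$ if $k$ not free in $M$; (E3) $[k](L\ \mathsf{where}\ x:=M)=([k]L\ \mathsf{where}\ x:=M)$. Values $V$: variables and $\lambda$-abstractions; $N$ a non-value. $=_{ccv}$ is the smallest congruence containing ($z$ fresh): $NM\to(zM\ \mathsf{where}\ z:=N)$; $VN\to(Vz\ \mathsf{where}\ z:=N)$; $(\lambda x.M)V\to(M\ \mathsf{where}\ x:=V)$; $(M\ \mathsf{where}\ x:=V)\to M\{V/x\}$; $(M\ \mathsf{where}\ x:=\mu k.J)\to\mu k.J\{[k]\square\mapsto[k](M\ \mathsf{where}\ x:=\square)\}$;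 $[l]\mu k.J\to J\{l/k\}$; $\lambda x.Vx\to V$ ($x$ not free in $V$); $(x\ \mathsf{where}\ x:=M)\to M$; $\mu k.[k]M\to M$ ($k$ not free in $M$); the context substitution replaces recursively each subjump $[k]Q$ with $k$ free by $[k](M\ \mathsf{where}\ x:=Q)$, and $J\{l/k\}$ replaces each such $[k]Q$ by $[l]Q$. CPS translation into the $\lambda$-calculus (fresh bound variables, $K$ a $\lambda$-term): $\langle V\rangle[K]=KV^*$; $\langle V_1V_2\rangle[K]=V_1^*V_2^*K$; $\langle VN\rangle[K]=\langle N\rangle[\lambda y.V^*yK]$; $\langle NV\rangle[K]=\langle N\rangle[\lambda x.xV^*K]$; $\langle N_1N_2\rangle[K]=\langle N_1\rangle[\lambda x.\langle N_2\rangle[\lambda y.xyK]]$; $\langle (L\ \mathsf{where}\ x:=M)\rangle[K]=\langle M\rangle[\lambda x.\langle L\rangle[K]]$ (renaming $x$ if free in $K$); $\langle\mu k.J\rangle[K]=(\lambda k.\langle J\rangle)K$; $\langle[k]M\rangle=\langle M\rangle[k]$; $\langle (J\ \mathsf{where}\ x:=M)\rangle=\langle M\rangle[\lambda x.\langle J\rangle]$; $x^*=x$; $(\lambda x.M)^*=\lambda xk.\langle M\rangle[k]$; $[\![M]\!]=\lambda k.\langle M\rangle[k]$, computed from any syntax-tree representative. *)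

theory Defs
  imports Main
begin

text \<open>Ordinary variables are de Bruijn indices counting only ordinary binders
(Lam and the body of a where); continuation variables are de Bruijn indices
counting only mu-binders.  Where L M stands for (L where x:=M), with x bound
(index 0) in L only; Mu J binds continuation index 0 in J.\<close>

datatype trm = Var nat | Lam trm | App trm trm | Where trm trm | Mu jmp
     and jmp = Jump nat trm | JWhere jmp trm

fun is_val :: "trm \<Rightarrow> bool" where
  "is_val (Var _) = True"
| "is_val (Lam _) = True"
| "is_val _ = False"

primrec lift_t :: "nat \<Rightarrow> trm \<Rightarrow> trm" and lift_j :: "nat \<Rightarrow> jmp \<Rightarrow> jmp" where
  "lift_t c (Var i) = Var (if i < c then i else Suc i)"
| "lift_t c (Lam M) = Lam (lift_t (Suc c) M)"
| "lift_t c (App M N) = App (lift_t c M) (lift_t c N)"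
| "lift_t c (Where L M) = Where (lift_t (Suc c) L) (lift_t c M)"
| "lift_t c (Mu J) = Mu (lift_j c J)"
| "lift_j c (Jump k M) = Jump k (lift_t c M)"
| "lift_j c (JWhere J M) = JWhere (lift_j (Suc c) J) (lift_t c M)"

primrec klift_t :: "nat \<Rightarrow> trm \<Rightarrow> trm" and klift_j :: "nat \<Rightarrow> jmp \<Rightarrow> jmp" where
  "klift_t c (Var i) = Var i"
| "klift_t c (Lam M) = Lam (klift_t c M)"
| "klift_t c (App M N) = App (klift_t c M) (klift_t c N)"
| "klift_t c (Where L M) = Where (klift_t c L) (klift_t c M)"
| "klift_t c (Mu J) = Mu (klift_j (Suc c) J)"
| "klift_j c (Jump k M) = Jump (if k < c then k else Suc k) (klift_t c M)"
| "klift_j c (JWhere J M) = JWhere (klift_j c J) (klift_t c M)"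

primrec subst_t :: "nat \<Rightarrow> trm \<Rightarrow> trm \<Rightarrow> trm" and subst_j :: "nat \<Rightarrow> trm \<Rightarrow> jmp \<Rightarrow> jmp" where
  "subst_t n V (Var i) = (if i = n then V else if n < i then Var (i - 1) else Var i)"
| "subst_t n V (Lam M) = Lam (subst_t (Suc n) (lift_t 0 V) M)"
| "subst_t n V (App M N) = App (subst_t n V M) (subst_t n V N)"
| "subst_t n V (Where L M) = Where (subst_t (Suc n) (lift_t 0 V) L) (subst_t n V M)"
| "subst_t n V (Mu J) = Mu (subst_j n (klift_t 0 V) J)"
| "subst_j n V (Jump k M) = Jump k (subst_t n V M)"
| "subst_j n V (JWhere J M) = JWhere (subst_j (Suc n) (lift_t 0 V) J) (subst_t n V M)"

text \<open>Continuation renaming: replace continuation index n by m (m given in the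
numbering after removal of the binder of n), decrementing indices above n.
\<open>krename_j 0 l J\<close> is \<open>J{l/k}\<close> for \<open>\<mu>k.J\<close>.\<close>
primrec krename_t :: "nat \<Rightarrow> nat \<Rightarrow> trm \<Rightarrow> trm" and krename_j :: "nat \<Rightarrow> nat \<Rightarrow> jmp \<Rightarrow> jmp" where
  "krename_t n m (Var i) = Var i"
| "krename_t n m (Lam M) = Lam (krename_t n m M)"
| "krename_t n m (App M N) = App (krename_t n m M) (krename_t n m N)"
| "krename_t n m (Where L M) = Where (krename_t n m L) (krename_t n m M)"
| "krename_t n m (Mu J) = Mu (krename_j (Suc n) (Suc m) J)"
| "krename_j n m (Jump k M) =
     Jump (if k = n then m else if n < k then k - 1 else k) (krename_t n m M)"
| "krename_j n m (JWhere J M) = JWhere (krename_j n m J) (krename_t n m M)"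

text \<open>Context substitution \<open>J{[k]\<box> \<mapsto> [k](M where x:=\<box>)}\<close>: n is the index of k,
C is M with its ordinary index 0 being x (bound by the inserted where) and
adapted to the current context.\<close>
primrec ctx_t :: "nat \<Rightarrow> trm \<Rightarrow> trm \<Rightarrow> trm" and ctx_j :: "nat \<Rightarrow> trm \<Rightarrow> jmp \<Rightarrow> jmp" where
  "ctx_t n C (Var i) = Var i"
| "ctx_t n C (Lam P) = Lam (ctx_t n (lift_t 1 C) P)"
| "ctx_t n C (App P Q) = App (ctx_t n C P) (ctx_t n C Q)"
| "ctx_t n C (Where L P) = Where (ctx_t n (lift_t 1 C) L) (ctx_t n C P)"
| "ctx_t n C (Mu J) = Mu (ctx_j (Suc n) (klift_t 0 C) J)"
| "ctx_j n C (Jump k Q) =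
     (if k = n then Jump k (Where C (ctx_t n C Q)) else Jump k (ctx_t n C Q))"
| "ctx_j n C (JWhere J P) = JWhere (ctx_j n (lift_t 1 C) J) (ctx_t n C P)"

text \<open>\<open>=\<^sub>c\<^sub>c\<^sub>v\<close>: the smallest congruence containing the ccv rules; the
identifications E1--E3 of the calculus are included as generating equations,
so that this relation on raw terms coincides with \<open>=\<^sub>c\<^sub>c\<^sub>v\<close> on E-classes.\<close>
inductive ccv_t :: "trm \<Rightarrow> trm \<Rightarrow> bool" and ccv_j :: "jmp \<Rightarrow> jmp \<Rightarrow> bool" where
  refl_t: "ccv_t M M"
| sym_t: "ccv_t M N \<Longrightarrow> ccv_t N M"
| trans_t: "ccv_t M N \<Longrightarrow> ccv_t N P \<Longrightarrow> ccv_t M P"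
| refl_j: "ccv_j J J"
| sym_j: "ccv_j J J' \<Longrightarrow> ccv_j J' J"
| trans_j: "ccv_j J J' \<Longrightarrow> ccv_j J' J'' \<Longrightarrow> ccv_j J J''"
| lam: "ccv_t M M' \<Longrightarrow> ccv_t (Lam M) (Lam M')"
| app: "ccv_t M M' \<Longrightarrow> ccv_t N N' \<Longrightarrow> ccv_t (App M N) (App M' N')"
| wher: "ccv_t L L' \<Longrightarrow> ccv_t M M' \<Longrightarrow> ccv_t (Where L M) (Where L' M')"
| mu: "ccv_j J J' \<Longrightarrow> ccv_t (Mu J) (Mu J')"
| jump: "ccv_t M M' \<Longrightarrow> ccv_j (Jump k M) (Jump k M')"
| jwhere: "ccv_j J J' \<Longrightarrow> ccv_t M M' \<Longrightarrow> ccv_j (JWhere J M) (JWhere J' M')"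
| E1_t: "ccv_t (Where L (Where M N)) (Where (Where (lift_t 1 L) M) N)"
| E1_j: "ccv_j (JWhere J (Where M N)) (JWhere (JWhere (lift_j 1 J) M) N)"
| E2: "ccv_t (Where (Mu J) M) (Mu (JWhere J (klift_t 0 M)))"
| E3: "ccv_j (Jump k (Where L M)) (JWhere (Jump k L) M)"
| r_nm: "\<not> is_val N \<Longrightarrow> ccv_t (App N M) (Where (App (Var 0) (lift_t 0 M)) N)"
| r_vn: "is_val V \<Longrightarrow> \<not> is_val N \<Longrightarrow> ccv_t (App V N) (Where (App (lift_t 0 V) (Var 0)) N)"
| r_beta: "is_val V \<Longrightarrow> ccv_t (App (Lam M) V) (Where M V)"
| r_subst: "is_val V \<Longrightarrow> ccv_t (Where M V) (subst_t 0 V M)"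
| r_mu: "ccv_t (Where M (Mu J)) (Mu (ctx_j 0 (klift_t 0 M) J))"
| r_ren: "ccv_j (Jump l (Mu J)) (krename_j 0 l J)"
| r_eta: "is_val V \<Longrightarrow> ccv_t (Lam (App (lift_t 0 V) (Var 0))) V"
| r_where_var: "ccv_t (Where (Var 0) M) M"
| r_mu_eta: "ccv_t (Mu (Jump 0 (klift_t 0 M))) M"

datatype lterm = LVar nat | LAbs lterm | LApp lterm lterm

primrec lshift :: "nat \<Rightarrow> lterm \<Rightarrow> lterm" where
  "lshift c (LVar i) = LVar (if i < c then i else Suc i)"
| "lshift c (LAbs t) = LAbs (lshift (Suc c) t)"
| "lshift c (LApp t u) = LApp (lshift c t) (lshift c u)"

primrec lsubst :: "nat \<Rightarrow> lterm \<Rightarrow> lterm \<Rightarrow> lterm" where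
  "lsubst n s (LVar i) = (if i = n then s else if n < i then LVar (i - 1) else LVar i)"
| "lsubst n s (LAbs t) = LAbs (lsubst (Suc n) (lshift 0 s) t)"
| "lsubst n s (LApp t u) = LApp (lsubst n s t) (lsubst n s u)"

inductive bn_eq :: "lterm \<Rightarrow> lterm \<Rightarrow> bool" where
  bn_refl: "bn_eq t t"
| bn_sym: "bn_eq t u \<Longrightarrow> bn_eq u t"
| bn_trans: "bn_eq t u \<Longrightarrow> bn_eq u v \<Longrightarrow> bn_eq t v"
| bn_abs: "bn_eq t t' \<Longrightarrow> bn_eq (LAbs t) (LAbs t')"
| bn_app: "bn_eq t t' \<Longrightarrow> bn_eq u u' \<Longrightarrow> bn_eq (LApp t u) (LApp t' u')"
| bn_beta: "bn_eq (LApp (LAbs t) s) (lsubst 0 s t)"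
| bn_eta: "bn_eq (LAbs (LApp (lshift 0 t) (LVar 0))) t"

text \<open>\<open>\<rho>\<close> maps ordinary indices, \<open>\<kappa>\<close> continuation indices, to target indices.\<close>

definition ext :: "(nat \<Rightarrow> nat) \<Rightarrow> nat \<Rightarrow> nat" where
  "ext \<rho> = case_nat 0 (\<lambda>i. Suc (\<rho> i))"

definition up :: "(nat \<Rightarrow> nat) \<Rightarrow> nat \<Rightarrow> nat" where
  "up \<rho> = (\<lambda>i. Suc (\<rho> i))"

fun vstar :: "(nat \<Rightarrow> nat) \<Rightarrow> (nat \<Rightarrow> nat) \<Rightarrow> trm \<Rightarrow> lterm"
and cps_t :: "(nat \<Rightarrow> nat) \<Rightarrow> (nat \<Rightarrow> nat) \<Rightarrow> trm \<Rightarrow> lterm \<Rightarrow> lterm"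
and cps_j :: "(nat \<Rightarrow> nat) \<Rightarrow> (nat \<Rightarrow> nat) \<Rightarrow> jmp \<Rightarrow> lterm" where
  "vstar \<rho> \<kappa> (Var i) = LVar (\<rho> i)"
| "vstar \<rho> \<kappa> (Lam M) = LAbs (LAbs (cps_t (up (ext \<rho>)) (up (up \<kappa>)) M (LVar 0)))"
| "vstar \<rho> \<kappa> (App M N) = undefined"
| "vstar \<rho> \<kappa> (Where M N) = undefined"
| "vstar \<rho> \<kappa> (Mu J) = undefined"
| "cps_t \<rho> \<kappa> (Var i) K = LApp K (LVar (\<rho> i))"
| "cps_t \<rho> \<kappa> (Lam M) K =
     LApp K (LAbs (LAbs (cps_t (up (ext \<rho>)) (up (up \<kappa>)) M (LVar 0))))"
| "cps_t \<rho> \<kappa> (App M N) K =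
     (if is_val M \<and> is_val N then LApp (LApp (vstar \<rho> \<kappa> M) (vstar \<rho> \<kappa> N)) K
      else if is_val M then
        cps_t \<rho> \<kappa> N (LAbs (LApp (LApp (lshift 0 (vstar \<rho> \<kappa> M)) (LVar 0)) (lshift 0 K)))
      else if is_val N then
        cps_t \<rho> \<kappa> M (LAbs (LApp (LApp (LVar 0) (lshift 0 (vstar \<rho> \<kappa> N))) (lshift 0 K)))
      else
        cps_t \<rho> \<kappa> M (LAbs (cps_t (up \<rho>) (up \<kappa>) N
           (LAbs (LApp (LApp (LVar 1) (LVar 0)) (lshift 0 (lshift 0 K)))))))"
| "cps_t \<rho> \<kappa> (Where L M) K = cps_t \<rho> \<kappa> M (LAbs (cps_t (ext \<rho>) (up \<kappa>) L (lshift 0 K)))"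
| "cps_t \<rho> \<kappa> (Mu J) K = LApp (LAbs (cps_j (up \<rho>) (ext \<kappa>) J)) K"
| "cps_j \<rho> \<kappa> (Jump k M) = cps_t \<rho> \<kappa> M (LVar (\<kappa> k))"
| "cps_j \<rho> \<kappa> (JWhere J M) = cps_t \<rho> \<kappa> M (LAbs (cps_j (ext \<rho>) (up \<kappa>) J))"

text \<open>\<open>[[M]] = \<lambda>k.\<langle>M\<rangle>[k]\<close>; free ordinary variable i and free continuation
variable j of M are sent to the distinct target free variables 2i and 2j+1.\<close>
definition cps :: "trm \<Rightarrow> lterm" where
  "cps M = LAbs (cps_t (\<lambda>i. Suc (2 * i)) (\<lambda>j. Suc (2 * j + 1)) M (LVar 0))"

end

theory Submission
  imports Defs
begin

text \<open>The translation \<open>cps_t\<close> avoids administrative redexes by treating values specially.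
Up to \<open>\<beta>\<eta>\<close> it agrees with the naive translation \<open>ncps_t\<close>, which passes every subterm
to a continuation and interprets the free ordinary and continuation variables by environments
of target terms instead of index maps.  With environments, each syntactic operation of the
source calculus (shifting, substitution of a value, renaming of a continuation variable,
context substitution) becomes an operation on the environments, so every generating rule of
\<open>=\<^sub>c\<^sub>c\<^sub>v\<close> is validated by a few \<open>\<beta>\<eta>\<close>-steps, while the compatibility
rules hold because \<open>ncps_t\<close> respects \<open>\<beta>\<eta>\<close> in its continuation argument.\<close>

section \<open>Parallel substitution on target terms\<close>

definition scons :: "'a \<Rightarrow> (nat \<Rightarrow> 'a) \<Rightarrow> nat \<Rightarrow> 'a" where
  "scons a f i = (case i of 0 \<Rightarrow> a | Suc j \<Rightarrow> f j)"

lemma scons_0 [simp]: "scons a f 0 = a"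
  and scons_Suc [simp]: "scons a f (Suc j) = f j"
  by (simp_all add: scons_def)

definition up_ren :: "(nat \<Rightarrow> nat) \<Rightarrow> nat \<Rightarrow> nat" where
  "up_ren f = scons 0 (Suc \<circ> f)"

lemma up_ren_0 [simp]: "up_ren f 0 = 0"
  and up_ren_Suc [simp]: "up_ren f (Suc j) = Suc (f j)"
  by (simp_all add: up_ren_def)

primrec lren :: "(nat \<Rightarrow> nat) \<Rightarrow> lterm \<Rightarrow> lterm" where
  "lren f (LVar i) = LVar (f i)"
| "lren f (LAbs t) = LAbs (lren (up_ren f) t)"
| "lren f (LApp t u) = LApp (lren f t) (lren f u)"

definition up_sub :: "(nat \<Rightarrow> lterm) \<Rightarrow> nat \<Rightarrow> lterm" where
  "up_sub \<sigma> = scons (LVar 0) (lren Suc \<circ> \<sigma>)"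

lemma up_sub_0 [simp]: "up_sub \<sigma> 0 = LVar 0"
  and up_sub_Suc [simp]: "up_sub \<sigma> (Suc i) = lren Suc (\<sigma> i)"
  by (simp_all add: up_sub_def)

primrec lsub :: "(nat \<Rightarrow> lterm) \<Rightarrow> lterm \<Rightarrow> lterm" where
  "lsub \<sigma> (LVar i) = \<sigma> i"
| "lsub \<sigma> (LAbs t) = LAbs (lsub (up_sub \<sigma>) t)"
| "lsub \<sigma> (LApp t u) = LApp (lsub \<sigma> t) (lsub \<sigma> u)"

lemma lren_lren: "lren f (lren g t) = lren (f \<circ> g) t"
proof (induction t arbitrary: f g)
  case (LAbs t)
  have "up_ren f \<circ> up_ren g = up_ren (f \<circ> g)"
    by (auto simp: fun_eq_iff up_ren_def scons_def split: nat.split)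
  then show ?case using LAbs by (simp add: comp_def)
qed simp_all

lemma lren_lsub: "lren f (lsub \<sigma> t) = lsub (lren f \<circ> \<sigma>) t"
proof (induction t arbitrary: f \<sigma>)
  case (LAbs t)
  have "lren (up_ren f) \<circ> up_sub \<sigma> = up_sub (lren f \<circ> \<sigma>)"
    by (auto simp: fun_eq_iff up_sub_def scons_def lren_lren comp_def split: nat.split)
  then show ?case using LAbs by (simp add: comp_def)
qed simp_all

lemma lsub_lren: "lsub \<sigma> (lren f t) = lsub (\<sigma> \<circ> f) t"
proof (induction t arbitrary: f \<sigma>)
  case (LAbs t)
  have "up_sub \<sigma> \<circ> up_ren f = up_sub (\<sigma> \<circ> f)"
    by (auto simp: fun_eq_iff up_sub_def up_ren_def scons_def split: nat.split)
  then show ?case using LAbs by (simp add: comp_def)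
qed simp_all

lemma lsub_lsub: "lsub \<sigma> (lsub \<tau> t) = lsub (lsub \<sigma> \<circ> \<tau>) t"
proof (induction t arbitrary: \<sigma> \<tau>)
  case (LAbs t)
  have "lsub (up_sub \<sigma>) \<circ> up_sub \<tau> = up_sub (lsub \<sigma> \<circ> \<tau>)"
    by (auto simp: fun_eq_iff up_sub_def scons_def lsub_lren lren_lsub comp_def split: nat.split)
  then show ?case using LAbs by (simp add: comp_def)
qed simp_all

lemma lsub_LVar [simp]: "lsub LVar t = t"
proof (induction t)
  case (LAbs t)
  have "up_sub LVar = LVar"
    by (auto simp: fun_eq_iff up_sub_def scons_def split: nat.split)
  then show ?case using LAbs by simp
qed simp_all

lemma lshift_eq_lren: "lshift c t = lren (\<lambda>i. if i < c then i else Suc i) t"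
proof (induction t arbitrary: c)
  case (LAbs t)
  have "up_ren (\<lambda>i. if i < c then i else Suc i) = (\<lambda>i. if i < Suc c then i else Suc i)"
    by (auto simp: fun_eq_iff up_ren_def scons_def split: nat.split)
  then show ?case using LAbs by simp
qed simp_all

lemma lshift_0_eq_lren: "lshift 0 t = lren Suc t"
  by (simp add: lshift_eq_lren)

lemma lsub_up_sub_lshift [simp]: "lsub (up_sub \<sigma>) (lshift 0 t) = lshift 0 (lsub \<sigma> t)"
  by (simp add: lshift_0_eq_lren lsub_lren lren_lsub up_sub_def comp_def)

lemma lsub_scons_lshift [simp]: "lsub (scons s \<sigma>) (lshift 0 t) = lsub \<sigma> t"
  by (simp add: lshift_0_eq_lren lsub_lren comp_def)

lemma lren_Suc [simp]: "lren Suc t = lshift 0 t"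
  by (simp add: lshift_0_eq_lren)

lemma lsubst_eq_lsub:
  "lsubst n s t = lsub (\<lambda>i. if i = n then s else if n < i then LVar (i - 1) else LVar i) t"
proof (induction t arbitrary: n s)
  case (LAbs t)
  have "up_sub (\<lambda>i. if i = n then s else if n < i then LVar (i - 1) else LVar i)
      = (\<lambda>i. if i = Suc n then lshift 0 s else if Suc n < i then LVar (i - 1) else LVar i)"
    by (auto simp: fun_eq_iff up_sub_def scons_def split: nat.split)
  then show ?case using LAbs by simp
qed simp_all

lemma lsubst_0_eq_lsub: "lsubst 0 s t = lsub (scons s LVar) t"
proof -
  have "(\<lambda>i. if i = 0 then s else if 0 < i then LVar (i - 1) else LVar i) = scons s LVar"
    by (auto simp: fun_eq_iff scons_def split: nat.split)
  then show ?thesis by (simp add: lsubst_eq_lsub)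
qed

definition lshift_sub :: "nat \<Rightarrow> nat \<Rightarrow> lterm" where
  "lshift_sub c i = LVar (if i < c then i else Suc i)"

lemma lshift_eq_lsub: "lshift c t = lsub (lshift_sub c) t"
proof -
  have "lshift_sub c = LVar \<circ> (\<lambda>i. if i < c then i else Suc i)"
    by (simp add: fun_eq_iff lshift_sub_def)
  then show ?thesis
    using lsub_lren[of LVar _ t] by (simp add: lshift_eq_lren)
qed

lemma lshift_sub_Suc: "lshift_sub (Suc c) = up_sub (lshift_sub c)"
  by (auto simp: fun_eq_iff lshift_sub_def up_sub_def scons_def split: nat.split)

lemma lsub_lshift_sub_0 [simp]: "lsub (lshift_sub 0) t = lshift 0 t"
  by (simp add: lshift_eq_lsub)

lemma lshift_Suc_eq_lsub [simp]: "lshift (Suc c) t = lsub (up_sub (lshift_sub c)) t"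
  by (simp add: lshift_eq_lsub lshift_sub_Suc)

lemma bn_beta_lsub: "lsub (scons s LVar) t = t' \<Longrightarrow> bn_eq (LApp (LAbs t) s) t'"
  using bn_beta[of t s] by (simp add: lsubst_0_eq_lsub)

declare bn_trans [trans]

lemma bn_eq_lsub: "bn_eq t u \<Longrightarrow> bn_eq (lsub \<sigma> t) (lsub \<sigma> u)"
proof (induction arbitrary: \<sigma> rule: bn_eq.induct)
  case (bn_beta t s)
  have "lsub (scons (lsub \<sigma> s) LVar) \<circ> up_sub \<sigma> = lsub \<sigma> \<circ> scons s LVar"
    by (auto simp: fun_eq_iff up_sub_def scons_def lsub_lren split: nat.split)
  then have "lsub (scons (lsub \<sigma> s) LVar) (lsub (up_sub \<sigma>) t) = lsub \<sigma> (lsubst 0 s t)"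
    by (simp add: lsubst_0_eq_lsub lsub_lsub)
  then show ?case
    by (simp add: bn_beta_lsub)
next
  case (bn_eta t)
  show ?case using bn_eq.bn_eta[of "lsub \<sigma> t"] by simp
qed (auto intro: bn_eq.intros)

lemma bn_eq_lshift: "bn_eq t u \<Longrightarrow> bn_eq (lshift 0 t) (lshift 0 u)"
  using bn_eq_lsub[of t u "lshift_sub 0"] by simp

lemma bn_eta_twice: "bn_eq (LAbs (LAbs (LApp (LApp (lshift 0 (lshift 0 t)) (LVar 1)) (LVar 0)))) t"
proof -
  have "bn_eq (LAbs (LApp (LApp (lshift 0 (lshift 0 t)) (LVar 1)) (LVar 0)))
      (LApp (lshift 0 t) (LVar 0))"
    using bn_eta[of "LApp (lshift 0 t) (LVar 0)"] by simp
  then show ?thesis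
    using bn_eta[of t] by (blast intro: bn_abs bn_trans)
qed

section \<open>The naive CPS translation\<close>

definition env_shift :: "(nat \<Rightarrow> lterm) \<Rightarrow> nat \<Rightarrow> lterm" where
  "env_shift R i = lshift 0 (R i)"

definition env_sub :: "(nat \<Rightarrow> lterm) \<Rightarrow> (nat \<Rightarrow> lterm) \<Rightarrow> nat \<Rightarrow> lterm" where
  "env_sub \<sigma> R i = lsub \<sigma> (R i)"

definition env_del :: "nat \<Rightarrow> (nat \<Rightarrow> 'a) \<Rightarrow> nat \<Rightarrow> 'a" where
  "env_del c R i = R (if i < c then i else Suc i)"

definition env_ins :: "nat \<Rightarrow> 'a \<Rightarrow> (nat \<Rightarrow> 'a) \<Rightarrow> nat \<Rightarrow> 'a" where
  "env_ins n v R i = (if i = n then v else if n < i then R (i - 1) else R i)"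

lemma env_shift_apply [simp]: "env_shift R i = lshift 0 (R i)"
  and env_sub_apply [simp]: "env_sub \<sigma> R i = lsub \<sigma> (R i)"
  and env_del_apply [simp]: "env_del c R i = R (if i < c then i else Suc i)"
  by (simp_all add: env_shift_def env_sub_def env_del_def)

lemma env_shift_scons [simp]: "env_shift (scons a R) = scons (lshift 0 a) (env_shift R)"
  and env_sub_scons [simp]: "env_sub \<sigma> (scons a R) = scons (lsub \<sigma> a) (env_sub \<sigma> R)"
  and env_sub_LVar [simp]: "env_sub LVar R = R"
  and env_sub_up_sub_shift [simp]: "env_sub (up_sub \<sigma>) (env_shift R) = env_shift (env_sub \<sigma> R)"
  and env_sub_scons_shift [simp]: "env_sub (scons s \<sigma>) (env_shift R) = env_sub \<sigma> R"
  and env_sub_shift [simp]: "env_sub (lshift_sub 0) R = env_shift R"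
  by (auto simp: fun_eq_iff scons_def split: nat.split)

lemma env_del_scons [simp]:
  "env_del 0 (scons a R) = R"
  "env_del (Suc c) (scons a R) = scons a (env_del c R)"
  and env_del_shift [simp]: "env_del c (env_shift R) = env_shift (env_del c R)"
  by (auto simp: fun_eq_iff scons_def split: nat.split)

lemma env_ins_0 [simp]: "env_ins 0 v R = scons v R"
  and env_ins_scons [simp]: "env_ins (Suc n) v (scons a R) = scons a (env_ins n v R)"
  and env_ins_shift [simp]: "env_ins n (lshift 0 v) (env_shift R) = env_shift (env_ins n v R)"
  by (auto simp: fun_eq_iff scons_def env_ins_def split: nat.split)

lemma env_update [simp]:
  "env_shift (R(n := v)) = (env_shift R)(n := lshift 0 v)"
  "env_sub \<sigma> (R(n := v)) = (env_sub \<sigma> R)(n := lsub \<sigma> v)"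
  "scons a (R(n := v)) = (scons a R)(Suc n := v)"
  "(scons a R)(0 := b) = scons b R"
  by (auto simp: fun_eq_iff scons_def split: nat.split)

primrec ncps_t :: "(nat \<Rightarrow> lterm) \<Rightarrow> (nat \<Rightarrow> lterm) \<Rightarrow> trm \<Rightarrow> lterm \<Rightarrow> lterm"
  and ncps_j :: "(nat \<Rightarrow> lterm) \<Rightarrow> (nat \<Rightarrow> lterm) \<Rightarrow> jmp \<Rightarrow> lterm" where
  "ncps_t R Kp (Var i) K = LApp K (R i)"
| "ncps_t R Kp (Lam M) K =
     LApp K (LAbs (LAbs (ncps_t (scons (LVar 1) (env_shift (env_shift R))) (env_shift (env_shift Kp)) M (LVar 0))))"
| "ncps_t R Kp (App M N) K =
     ncps_t R Kp M (LAbs (ncps_t (env_shift R) (env_shift Kp) N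
       (LAbs (LApp (LApp (LVar 1) (LVar 0)) (lshift 0 (lshift 0 K))))))"
| "ncps_t R Kp (Where L M) K =
     ncps_t R Kp M (LAbs (ncps_t (scons (LVar 0) (env_shift R)) (env_shift Kp) L (lshift 0 K)))"
| "ncps_t R Kp (Mu J) K = LApp (LAbs (ncps_j (env_shift R) (scons (LVar 0) (env_shift Kp)) J)) K"
| "ncps_j R Kp (Jump k M) = ncps_t R Kp M (Kp k)"
| "ncps_j R Kp (JWhere J M) = ncps_t R Kp M (LAbs (ncps_j (scons (LVar 0) (env_shift R)) (env_shift Kp) J))"

fun ncps_val :: "(nat \<Rightarrow> lterm) \<Rightarrow> (nat \<Rightarrow> lterm) \<Rightarrow> trm \<Rightarrow> lterm" where
  "ncps_val R Kp (Var i) = R i"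
| "ncps_val R Kp (Lam M) =
     LAbs (LAbs (ncps_t (scons (LVar 1) (env_shift (env_shift R))) (env_shift (env_shift Kp)) M (LVar 0)))"
| "ncps_val R Kp _ = undefined"

lemma ncps_t_val: "is_val V \<Longrightarrow> ncps_t R Kp V K = LApp K (ncps_val R Kp V)"
  by (cases V) auto

lemma lsub_ncps:
  "lsub \<sigma> (ncps_t R Kp M K) = ncps_t (env_sub \<sigma> R) (env_sub \<sigma> Kp) M (lsub \<sigma> K)"
  "lsub \<sigma> (ncps_j R Kp J) = ncps_j (env_sub \<sigma> R) (env_sub \<sigma> Kp) J"
  by (induction M and J arbitrary: \<sigma> R Kp K and \<sigma> R Kp) auto

lemma lsub_ncps_val:
  "is_val V \<Longrightarrow> lsub \<sigma> (ncps_val R Kp V) = ncps_val (env_sub \<sigma> R) (env_sub \<sigma> Kp) V"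
  by (cases V) (auto simp: lsub_ncps)

lemma lshift_ncps_val:
  "is_val V \<Longrightarrow> lshift 0 (ncps_val R Kp V) = ncps_val (env_shift R) (env_shift Kp) V"
  using lsub_ncps_val[of V "lshift_sub 0"] by simp

lemma ncps_t_cong_cont: "bn_eq K K' \<Longrightarrow> bn_eq (ncps_t R Kp M K) (ncps_t R Kp M K')"
  by (induction M arbitrary: R Kp K K') (simp_all add: bn_app bn_abs bn_refl bn_eq_lshift)

lemma is_val_lift [simp]: "is_val (lift_t c V) = is_val V"
  and is_val_klift [simp]: "is_val (klift_t c V) = is_val V"
  by (cases V; simp)+

lemma ncps_lift:
  "ncps_t R Kp (lift_t c M) K = ncps_t (env_del c R) Kp M K"
  "ncps_j R Kp (lift_j c J) = ncps_j (env_del c R) Kp J"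
  by (induction M and J arbitrary: c R Kp K and c R Kp) auto

lemma ncps_klift:
  "ncps_t R Kp (klift_t c M) K = ncps_t R (env_del c Kp) M K"
  "ncps_j R Kp (klift_j c J) = ncps_j R (env_del c Kp) J"
  by (induction M and J arbitrary: c R Kp K and c R Kp) auto

lemma ncps_val_lift: "ncps_val R Kp (lift_t c V) = ncps_val (env_del c R) Kp V"
  and ncps_val_klift: "ncps_val R Kp (klift_t c V) = ncps_val R (env_del c Kp) V"
  by (cases V; simp add: ncps_lift ncps_klift)+

lemma ncps_subst:
  "is_val V \<Longrightarrow> ncps_t R Kp (subst_t n V M) K = ncps_t (env_ins n (ncps_val R Kp V) R) Kp M K"
  "is_val V \<Longrightarrow> ncps_j R Kp (subst_j n V J) = ncps_j (env_ins n (ncps_val R Kp V) R) Kp J"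
  by (induction M and J arbitrary: n V R Kp K and n V R Kp)
     (auto simp: ncps_t_val ncps_val_lift ncps_val_klift lshift_ncps_val[symmetric] env_ins_def)

lemma ncps_krename:
  "ncps_t R Kp (krename_t n m M) K = ncps_t R (env_ins n (Kp m) Kp) M K"
  "ncps_j R Kp (krename_j n m J) = ncps_j R (env_ins n (Kp m) Kp) J"
  by (induction M and J arbitrary: n m R Kp K and n m R Kp) (auto simp: env_ins_def)

text \<open>The context \<open>[k](C where x:=\<box>)\<close> becomes the continuation \<open>\<lambda>x.\<langle>C\<rangle>[k]\<close>.\<close>

definition ctx_cont :: "(nat \<Rightarrow> lterm) \<Rightarrow> (nat \<Rightarrow> lterm) \<Rightarrow> trm \<Rightarrow> nat \<Rightarrow> lterm" where
  "ctx_cont R Kp C n = LAbs (ncps_t (scons (LVar 0) (env_shift R)) (env_shift Kp) C (lshift 0 (Kp n)))"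

lemma ncps_ctx:
  "ncps_t R Kp (ctx_t n C P) K = ncps_t R (Kp(n := ctx_cont R Kp C n)) P K"
  "ncps_j R Kp (ctx_j n C J) = ncps_j R (Kp(n := ctx_cont R Kp C n)) J"
  by (induction P and J arbitrary: n C R Kp K and n C R Kp)
     (auto simp: ctx_cont_def ncps_lift ncps_klift lsub_ncps)

section \<open>Soundness of the naive translation for \<open>=\<^sub>c\<^sub>c\<^sub>v\<close>\<close>

lemma ncps_where_val:
  "is_val V \<Longrightarrow> bn_eq (ncps_t R Kp (Where M V) K) (ncps_t (scons (ncps_val R Kp V) R) Kp M K)"
  by (simp add: ncps_t_val bn_beta_lsub lsub_ncps)

lemma ncps_app_vals:
  assumes "is_val V" "is_val W"
  shows "bn_eq (ncps_t R Kp (App V W) K) (LApp (LApp (ncps_val R Kp V) (ncps_val R Kp W)) K)"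
  using assms
  by (simp add: ncps_t_val lshift_ncps_val[symmetric])
     (rule bn_trans, rule bn_beta_lsub, simp, rule bn_beta_lsub, simp)

lemma ncps_app_val_left:
  "is_val V \<Longrightarrow> bn_eq (ncps_t R Kp (App V N) K)
     (ncps_t R Kp N (LAbs (LApp (LApp (lshift 0 (ncps_val R Kp V)) (LVar 0)) (lshift 0 K))))"
  by (simp add: ncps_t_val bn_beta_lsub lsub_ncps)

lemma ncps_app_val_right:
  "is_val W \<Longrightarrow> bn_eq (ncps_t R Kp (App M W) K)
     (ncps_t R Kp M (LAbs (LApp (LApp (LVar 0) (lshift 0 (ncps_val R Kp W))) (lshift 0 K))))"
  by (simp add: ncps_t_val lshift_ncps_val[symmetric])
     (rule ncps_t_cong_cont, rule bn_abs, rule bn_beta_lsub, simp)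

lemma ncps_val_Lam_app:
  "bn_eq (LApp (LApp (ncps_val R Kp (Lam M)) v) K) (ncps_t (scons v R) Kp M K)"
proof -
  have "bn_eq (LApp (ncps_val R Kp (Lam M)) v)
      (LAbs (ncps_t (scons (lshift 0 v) (env_shift R)) (env_shift Kp) M (LVar 0)))"
    by (simp, rule bn_beta_lsub) (simp add: lsub_ncps)
  then have "bn_eq (LApp (LApp (ncps_val R Kp (Lam M)) v) K)
      (LApp (LAbs (ncps_t (scons (lshift 0 v) (env_shift R)) (env_shift Kp) M (LVar 0))) K)"
    by (rule bn_app) (rule bn_refl)
  also have "bn_eq \<dots> (ncps_t (scons v R) Kp M K)"
    by (rule bn_beta_lsub) (simp add: lsub_ncps)
  finally show ?thesis .
qed

lemma ncps_Where_Mu_fun: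
  "bn_eq (ncps_t R Kp (Where (Mu J) M) K) (ncps_t R Kp (Mu (JWhere J (klift_t 0 M))) K)"
proof -
  let ?k = "LAbs (ncps_j (scons (LVar 0) (env_shift R)) (scons (lshift 0 K) (env_shift Kp)) J)"
  have "bn_eq (ncps_t R Kp (Where (Mu J) M) K) (ncps_t R Kp M ?k)"
    by simp (rule ncps_t_cong_cont, rule bn_abs, rule bn_beta_lsub, simp add: lsub_ncps)
  also have "bn_eq \<dots> (ncps_t R Kp (Mu (JWhere J (klift_t 0 M))) K)"
    by (simp, rule bn_sym, rule bn_beta_lsub) (simp add: lsub_ncps ncps_klift)
  finally show ?thesis .
qed

lemma ncps_App_let_fun:
  "bn_eq (ncps_t R Kp (App N M) K) (ncps_t R Kp (Where (App (Var 0) (lift_t 0 M)) N) K)"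
  by simp (rule ncps_t_cong_cont, rule bn_abs, rule bn_sym, rule bn_beta_lsub, simp add: lsub_ncps ncps_lift)

lemma ncps_App_let_arg:
  assumes "is_val V"
  shows "bn_eq (ncps_t R Kp (App V N) K) (ncps_t R Kp (Where (App (lift_t 0 V) (Var 0)) N) K)"
proof -
  let ?R = "scons (LVar 0) (env_shift R)" and ?Kp = "env_shift Kp"
  let ?k = "LApp (LApp (lshift 0 (ncps_val R Kp V)) (LVar 0)) (lshift 0 K)"
  have "bn_eq (ncps_t ?R ?Kp (App (lift_t 0 V) (Var 0)) (lshift 0 K))
      (LApp (LApp (ncps_val ?R ?Kp (lift_t 0 V)) (ncps_val ?R ?Kp (Var 0))) (lshift 0 K))"
    using assms by (intro ncps_app_vals) simp_all
  also have "\<dots> = ?k"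
    using assms by (simp add: ncps_val_lift lshift_ncps_val)
  finally have "bn_eq (ncps_t R Kp N (LAbs ?k)) (ncps_t R Kp (Where (App (lift_t 0 V) (Var 0)) N) K)"
    unfolding ncps_t.simps(4) by (intro ncps_t_cong_cont bn_abs) (rule bn_sym)
  with ncps_app_val_left[OF assms] show ?thesis
    by (rule bn_trans)
qed

lemma ncps_beta_v:
  assumes "is_val V"
  shows "bn_eq (ncps_t R Kp (App (Lam M) V) K) (ncps_t R Kp (Where M V) K)"
proof -
  have "bn_eq (ncps_t R Kp (App (Lam M) V) K) (LApp (LApp (ncps_val R Kp (Lam M)) (ncps_val R Kp V)) K)"
    using assms by (intro ncps_app_vals) simp_all
  also have "bn_eq \<dots> (ncps_t (scons (ncps_val R Kp V) R) Kp M K)"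
    by (rule ncps_val_Lam_app)
  also have "bn_eq \<dots> (ncps_t R Kp (Where M V) K)"
    using ncps_where_val[OF assms] by (rule bn_sym)
  finally show ?thesis .
qed

lemma ncps_Where_Mu_arg:
  "bn_eq (ncps_t R Kp (Where M (Mu J)) K) (ncps_t R Kp (Mu (ctx_j 0 (klift_t 0 M) J)) K)"
proof -
  let ?k = "LAbs (ncps_t (scons (LVar 0) (env_shift R)) (env_shift Kp) M (lshift 0 K))"
  have "bn_eq (ncps_t R Kp (Where M (Mu J)) K) (ncps_j R (scons ?k Kp) J)"
    by simp (rule bn_beta_lsub, simp add: lsub_ncps)
  also have "bn_eq \<dots> (ncps_t R Kp (Mu (ctx_j 0 (klift_t 0 M) J)) K)"
    by (simp add: ncps_ctx, rule bn_sym, rule bn_beta_lsub) (simp add: lsub_ncps ncps_klift ctx_cont_def)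
  finally show ?thesis .
qed

lemma ncps_Jump_Mu: "bn_eq (ncps_j R Kp (Jump l (Mu J))) (ncps_j R Kp (krename_j 0 l J))"
  by (simp add: ncps_krename) (rule bn_beta_lsub, simp add: lsub_ncps)

lemma ncps_eta_v:
  assumes "is_val V"
  shows "bn_eq (ncps_t R Kp (Lam (App (lift_t 0 V) (Var 0))) K) (ncps_t R Kp V K)"
proof -
  let ?R = "scons (LVar 1) (env_shift (env_shift R))" and ?Kp = "env_shift (env_shift Kp)"
  let ?v = "ncps_val R Kp V"
  have "bn_eq (ncps_t ?R ?Kp (App (lift_t 0 V) (Var 0)) (LVar 0))
      (LApp (LApp (ncps_val ?R ?Kp (lift_t 0 V)) (ncps_val ?R ?Kp (Var 0))) (LVar 0))"
    using assms by (intro ncps_app_vals) simp_all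
  also have "\<dots> = LApp (LApp (lshift 0 (lshift 0 ?v)) (LVar 1)) (LVar 0)"
    using assms by (simp add: ncps_val_lift lshift_ncps_val)
  finally have body: "bn_eq (ncps_t ?R ?Kp (App (lift_t 0 V) (Var 0)) (LVar 0))
      (LApp (LApp (lshift 0 (lshift 0 ?v)) (LVar 1)) (LVar 0))" .
  have "bn_eq (ncps_val R Kp (Lam (App (lift_t 0 V) (Var 0))))
      (LAbs (LAbs (LApp (LApp (lshift 0 (lshift 0 ?v)) (LVar 1)) (LVar 0))))"
    unfolding ncps_val.simps by (intro bn_abs body)
  also have "bn_eq \<dots> ?v"
    by (rule bn_eta_twice)
  finally show ?thesis
    using assms by (simp add: ncps_t_val bn_app bn_refl del: ncps_t.simps(3))
qed

lemma ncps_ccv: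
  "ccv_t M M' \<Longrightarrow> bn_eq (ncps_t R Kp M K) (ncps_t R Kp M' K)"
  "ccv_j J J' \<Longrightarrow> bn_eq (ncps_j R Kp J) (ncps_j R Kp J')"
proof (induction arbitrary: R Kp K and R Kp rule: ccv_t_ccv_j.inducts)
  case (sym_t M N)
  then show ?case by (blast intro: bn_sym)
next
  case (trans_t M N P)
  then show ?case by (blast intro: bn_trans)
next
  case (sym_j J J')
  then show ?case by (blast intro: bn_sym)
next
  case (trans_j J J' J'')
  then show ?case by (blast intro: bn_trans)
next
  case (app M M' N N')
  show ?case
    by (simp only: ncps_t.simps)
       (rule bn_trans, rule app.IH(1), rule ncps_t_cong_cont, rule bn_abs, rule app.IH(2))
next
  case (wher L L' M M')
  show ?case
    by (simp only: ncps_t.simps)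
       (rule bn_trans, rule wher.IH(2), rule ncps_t_cong_cont, rule bn_abs, rule wher.IH(1))
next
  case (jwhere J J' M M')
  show ?case
    by (simp only: ncps_j.simps)
       (rule bn_trans, rule jwhere.IH(2), rule ncps_t_cong_cont, rule bn_abs, rule jwhere.IH(1))
next
  case (E2 J M)
  show ?case by (rule ncps_Where_Mu_fun)
next
  case (r_nm N M)
  show ?case by (rule ncps_App_let_fun)
next
  case (r_vn V N)
  show ?case using r_vn.hyps(1) by (rule ncps_App_let_arg)
next
  case (r_beta V M)
  then show ?case by (rule ncps_beta_v)
next
  case (r_subst V M)
  then show ?case
    using ncps_where_val[of V R Kp M K] by (simp add: ncps_subst)
next
  case (r_mu M J)
  show ?case by (rule ncps_Where_Mu_arg)
next
  case (r_ren l J)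
  show ?case by (rule ncps_Jump_Mu)
next
  case (r_eta V)
  then show ?case by (rule ncps_eta_v)
next
  case (r_where_var M)
  show ?case
    by simp (rule ncps_t_cong_cont, rule bn_eta)
next
  case (r_mu_eta M)
  show ?case
    by (simp add: ncps_klift) (rule bn_beta_lsub, simp add: lsub_ncps)
qed (simp_all add: bn_app bn_abs bn_refl ncps_lift lsub_ncps)

section \<open>The optimised translation agrees with the naive one\<close>

abbreviation var_env :: "(nat \<Rightarrow> nat) \<Rightarrow> nat \<Rightarrow> lterm" where
  "var_env \<rho> \<equiv> \<lambda>i. LVar (\<rho> i)"

lemma var_env_ext: "var_env (ext \<rho>) = scons (LVar 0) (env_shift (var_env \<rho>))"
  and var_env_up: "var_env (up \<rho>) = env_shift (var_env \<rho>)"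
  by (auto simp: fun_eq_iff ext_def up_def scons_def split: nat.split)

lemma cps_App_eq_ncps:
  assumes IH_M: "\<And>\<rho>' \<kappa>' K'. bn_eq (cps_t \<rho>' \<kappa>' M K') (ncps_t (var_env \<rho>') (var_env \<kappa>') M K')"
    and IH_N: "\<And>\<rho>' \<kappa>' K'. bn_eq (cps_t \<rho>' \<kappa>' N K') (ncps_t (var_env \<rho>') (var_env \<kappa>') N K')"
    and val_M: "is_val M \<Longrightarrow> bn_eq (vstar \<rho> \<kappa> M) (ncps_val (var_env \<rho>) (var_env \<kappa>) M)"
    and val_N: "is_val N \<Longrightarrow> bn_eq (vstar \<rho> \<kappa> N) (ncps_val (var_env \<rho>) (var_env \<kappa>) N)"
  shows "bn_eq (cps_t \<rho> \<kappa> (App M N) K) (ncps_t (var_env \<rho>) (var_env \<kappa>) (App M N) K)"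
proof -
  let ?R = "var_env \<rho>" and ?Kp = "var_env \<kappa>"
  show ?thesis
  proof (cases "is_val M"; cases "is_val N")
    assume M: "is_val M" and N: "is_val N"
    have "bn_eq (cps_t \<rho> \<kappa> (App M N) K) (LApp (LApp (ncps_val ?R ?Kp M) (ncps_val ?R ?Kp N)) K)"
      using M N val_M val_N by (simp add: bn_app bn_refl)
    also have "bn_eq \<dots> (ncps_t ?R ?Kp (App M N) K)"
      using ncps_app_vals[OF M N] by (rule bn_sym)
    finally show ?thesis .
  next
    assume M: "is_val M" and N: "\<not> is_val N"
    have "bn_eq (cps_t \<rho> \<kappa> (App M N) K)
        (ncps_t ?R ?Kp N (LAbs (LApp (LApp (lshift 0 (vstar \<rho> \<kappa> M)) (LVar 0)) (lshift 0 K))))"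
      using M N IH_N by simp
    also have "bn_eq \<dots>
        (ncps_t ?R ?Kp N (LAbs (LApp (LApp (lshift 0 (ncps_val ?R ?Kp M)) (LVar 0)) (lshift 0 K))))"
      using val_M[OF M] by (intro ncps_t_cong_cont bn_abs bn_app bn_refl bn_eq_lshift)
    also have "bn_eq \<dots> (ncps_t ?R ?Kp (App M N) K)"
      using ncps_app_val_left[OF M] by (rule bn_sym)
    finally show ?thesis .
  next
    assume M: "\<not> is_val M" and N: "is_val N"
    have "bn_eq (cps_t \<rho> \<kappa> (App M N) K)
        (ncps_t ?R ?Kp M (LAbs (LApp (LApp (LVar 0) (lshift 0 (vstar \<rho> \<kappa> N))) (lshift 0 K))))"
      using M N IH_M by simp
    also have "bn_eq \<dots>
        (ncps_t ?R ?Kp M (LAbs (LApp (LApp (LVar 0) (lshift 0 (ncps_val ?R ?Kp N))) (lshift 0 K))))"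
      using val_N[OF N] by (intro ncps_t_cong_cont bn_abs bn_app bn_refl bn_eq_lshift)
    also have "bn_eq \<dots> (ncps_t ?R ?Kp (App M N) K)"
      using ncps_app_val_right[OF N] by (rule bn_sym)
    finally show ?thesis .
  next
    assume "\<not> is_val M" and "\<not> is_val N"
    moreover have "bn_eq (cps_t (up \<rho>) (up \<kappa>) N K') (ncps_t (env_shift ?R) (env_shift ?Kp) N K')" for K'
      using IH_N[of "up \<rho>" "up \<kappa>" K'] unfolding var_env_up .
    ultimately show ?thesis
      by simp (rule bn_trans, rule IH_M, rule ncps_t_cong_cont, rule bn_abs, assumption)
  qed
qed

lemma cps_eq_ncps:
  "bn_eq (cps_t \<rho> \<kappa> M K) (ncps_t (var_env \<rho>) (var_env \<kappa>) M K) \<and>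
   (is_val M \<longrightarrow> bn_eq (vstar \<rho> \<kappa> M) (ncps_val (var_env \<rho>) (var_env \<kappa>) M))"
  "bn_eq (cps_j \<rho> \<kappa> J) (ncps_j (var_env \<rho>) (var_env \<kappa>) J)"
proof (induction M and J arbitrary: \<rho> \<kappa> K and \<rho> \<kappa>)
  case (Var i)
  then show ?case by (simp add: bn_refl)
next
  case (Lam M)
  have "bn_eq (cps_t (up (ext \<rho>)) (up (up \<kappa>)) M (LVar 0))
      (ncps_t (var_env (up (ext \<rho>))) (var_env (up (up \<kappa>))) M (LVar 0))"
    using Lam by blast
  then have "bn_eq (vstar \<rho> \<kappa> (Lam M)) (ncps_val (var_env \<rho>) (var_env \<kappa>) (Lam M))"
    unfolding var_env_ext var_env_up by (simp add: bn_abs)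
  then show ?case by (simp add: bn_app bn_refl)
next
  case (App M N)
  then have "bn_eq (cps_t \<rho> \<kappa> (App M N) K) (ncps_t (var_env \<rho>) (var_env \<kappa>) (App M N) K)"
    by (intro cps_App_eq_ncps) blast+
  then show ?case by simp
next
  case (Where L M)
  let ?R = "var_env \<rho>" and ?Kp = "var_env \<kappa>"
  have L: "bn_eq (cps_t (ext \<rho>) (up \<kappa>) L K') (ncps_t (scons (LVar 0) (env_shift ?R)) (env_shift ?Kp) L K')"
    for K'
    using Where(1)[of "ext \<rho>" "up \<kappa>" K'] unfolding var_env_ext var_env_up by blast
  have "bn_eq (cps_t \<rho> \<kappa> (Where L M) K) (ncps_t ?R ?Kp M (LAbs (cps_t (ext \<rho>) (up \<kappa>) L (lshift 0 K))))"
    using Where(2) by simp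
  also have "bn_eq \<dots> (ncps_t ?R ?Kp (Where L M) K)"
    using L by (simp add: ncps_t_cong_cont bn_abs)
  finally show ?case by simp
next
  case (Mu J)
  have "bn_eq (cps_j (up \<rho>) (ext \<kappa>) J)
      (ncps_j (env_shift (var_env \<rho>)) (scons (LVar 0) (env_shift (var_env \<kappa>))) J)"
    using Mu[of "up \<rho>" "ext \<kappa>"] unfolding var_env_ext var_env_up .
  then show ?case by (simp add: bn_app bn_abs bn_refl)
next
  case (Jump k M)
  then show ?case by simp
next
  case (JWhere J M)
  let ?R = "var_env \<rho>" and ?Kp = "var_env \<kappa>"
  have J: "bn_eq (cps_j (ext \<rho>) (up \<kappa>) J) (ncps_j (scons (LVar 0) (env_shift ?R)) (env_shift ?Kp) J)"
    using JWhere(1)[of "ext \<rho>" "up \<kappa>"] unfolding var_env_ext var_env_up .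
  have "bn_eq (cps_j \<rho> \<kappa> (JWhere J M)) (ncps_t ?R ?Kp M (LAbs (cps_j (ext \<rho>) (up \<kappa>) J)))"
    using JWhere(2) by simp
  also have "bn_eq \<dots> (ncps_j ?R ?Kp (JWhere J M))"
    using J by (simp add: ncps_t_cong_cont bn_abs)
  finally show ?case .
qed

theorem proposition1p15:
  assumes "ccv_t L M"
  shows "bn_eq (cps L) (cps M)"
proof -
  define \<rho> where "\<rho> i = Suc (2 * i)" for i :: nat
  define \<kappa> where "\<kappa> j = Suc (2 * j + 1)" for j :: nat
  have "bn_eq (cps_t \<rho> \<kappa> L (LVar 0)) (ncps_t (var_env \<rho>) (var_env \<kappa>) L (LVar 0))"
    using cps_eq_ncps(1) by blast
  also have "bn_eq \<dots> (ncps_t (var_env \<rho>) (var_env \<kappa>) M (LVar 0))"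
    using assms by (rule ncps_ccv)
  also have "bn_eq \<dots> (cps_t \<rho> \<kappa> M (LVar 0))"
    using cps_eq_ncps(1) by (blast intro: bn_sym)
  finally show ?thesis
    unfolding cps_def \<rho>_def[abs_def] \<kappa>_def[abs_def] by (rule bn_abs)
qed

end
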